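(* Let $J^*_T=\inf_{\pi\in\Pi}J_T(\pi)$ and let $\Pi^*_T=\{\pi\in\Pi: J_T(\pi)=J^*_T\}$ for $T\in[0,\infty]$. Then: (1) $J^*_T$ does not depend on $T$, i.e. $J^*_T=J^*_0=:J^*$ for all $T\in[0,\infty]$; (2) for all $T_1<T_2$ in $[0,\infty]$, $\Pi^*_{T_1}\subseteq\Pi^*_{T_2}$; (3) for every $p_0\in|G|^k$ and every $T>D_G+J^*/\phi_{\min}$ (with $T$ finite), $\Pi^*_T\cap\Pi_{p_0}\neq\emptyset$, where $\Pi_{p_0}=\{\pi\in\Pi:\pi(0)=p_0\}$.
   Context: Let $G=(V,E,A,\phi)$ be a finite connected undirected graph with node set $V$, edge set $E$, edge lengths $A:E\to\mathbb{R}_{>0}$ and node weights $\phi:V\to\mathbb{R}_{>0}$; $\phi_{\min}=\min_v\phi(v)$. Let $|G|$ be its metric graph (each edge $e$ realized as a closed interval of length $A(e)$ glued at its endpoints) with shortest-path metric $d$, and let $D_G$ be the diameter of $(|G|,d)$. Fix $k\ge1$ robots $r_1,\dots,r_k$, and equip $|G|^k$ with $d_k(p,p')=\max_i d(p_i,p'_i)$. Feasible joint strategies: $\Pi=\{\pi\in C([0,\infty),|G|^k):\ d_k(\pi(t),\pi(t'))\le|t-t'|\ \forall t,t'\ge0\}$, $\pi=(\pi_{r_1},\dots,\pi_{r_k})$. For $v\in V$, $t\ge0$: $\tau^\pi(v,t)=\sup\{t'\le t:\pi_r(t')=v\text{ for some }r\}$ if nonempty, else $0$; $L^\pi_v(t)=t-\tau^\pi(v,t)$;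 $M^\pi(t)=\max_{v}\phi(v)L^\pi_v(t)$. For finite $T\ge 0$, $J_T(\pi)=\sup_{t\ge T}M^\pi(t)\in[0,\infty]$; $J_\infty(\pi)=\limsup_{t\to\infty}M^\pi(t)$. *)

theory Defs
  imports "HOL-Analysis.Analysis" "HOL-Library.Liminf_Limsup"
begin

text \<open>Weighted graph G = (V, E, A, phi): finite node set V, finite edge set E, each
 edge e has two endpoints ends e (an undirected edge, loops allowed), a length A e > 0,
 node weights phi v > 0, connected.\<close>

definition wf_graph :: "'v set \<Rightarrow> 'e set \<Rightarrow> ('e \<Rightarrow> 'v \<times> 'v) \<Rightarrow> ('e \<Rightarrow> real) \<Rightarrow> ('v \<Rightarrow> real) \<Rightarrow> bool" where
  "wf_graph V E ends A phi \<longleftrightarrow>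
     finite V \<and> V \<noteq> {} \<and> finite E \<and>
     (\<forall>e\<in>E. fst (ends e) \<in> V \<and> snd (ends e) \<in> V) \<and>
     (\<forall>e\<in>E. A e > 0) \<and> (\<forall>v\<in>V. phi v > 0) \<and>
     (\<forall>u\<in>V. \<forall>v\<in>V. (u, v) \<in> ({(a, b). \<exists>e\<in>E. ends e = (a, b) \<or> ends e = (b, a)})\<^sup>*)"

text \<open>Points of the metric graph |G|: a node, or an interior point of an edge e at
 distance s \<in> (0, A e) from its first endpoint.\<close>
datatype ('v, 'e) gpt = Vtx 'v | EPt 'e real

definition gpoints :: "'v set \<Rightarrow> 'e set \<Rightarrow> ('e \<Rightarrow> real) \<Rightarrow> ('v, 'e) gpt set" where
  "gpoints V E A = Vtx ` V \<union> {EPt e s | e s. e \<in> E \<and> 0 < s \<and> s < A e}"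

text \<open>Coordinates of a point on the closed interval realizing edge e.\<close>
fun gpos :: "('e \<Rightarrow> 'v \<times> 'v) \<Rightarrow> ('e \<Rightarrow> real) \<Rightarrow> ('v, 'e) gpt \<Rightarrow> 'e \<Rightarrow> real set" where
  "gpos ends A (Vtx v) e = (if fst (ends e) = v then {0} else {}) \<union> (if snd (ends e) = v then {A e} else {})"
| "gpos ends A (EPt e' s) e = (if e' = e \<and> 0 < s \<and> s < A e then {s} else {})"

inductive gwalk :: "'v set \<Rightarrow> 'e set \<Rightarrow> ('e \<Rightarrow> 'v \<times> 'v) \<Rightarrow> ('e \<Rightarrow> real) \<Rightarrow>
    ('v, 'e) gpt \<Rightarrow> ('v, 'e) gpt \<Rightarrow> real \<Rightarrow> bool"
  for V E ends A where
  refl: "x \<in> gpoints V E A \<Longrightarrow> gwalk V E ends A x x 0"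
| step: "e \<in> E \<Longrightarrow> s \<in> gpos ends A x e \<Longrightarrow> t \<in> gpos ends A y e \<Longrightarrow>
         gwalk V E ends A y z c \<Longrightarrow> gwalk V E ends A x z (\<bar>s - t\<bar> + c)"

definition gdist :: "'v set \<Rightarrow> 'e set \<Rightarrow> ('e \<Rightarrow> 'v \<times> 'v) \<Rightarrow> ('e \<Rightarrow> real) \<Rightarrow>
    ('v, 'e) gpt \<Rightarrow> ('v, 'e) gpt \<Rightarrow> real" where
  "gdist V E ends A x y = Inf {c. gwalk V E ends A x y c}"

definition gdiam :: "'v set \<Rightarrow> 'e set \<Rightarrow> ('e \<Rightarrow> 'v \<times> 'v) \<Rightarrow> ('e \<Rightarrow> real) \<Rightarrow> real" where
  "gdiam V E ends A = Sup {gdist V E ends A x y | x y. x \<in> gpoints V E A \<and> y \<in> gpoints V E A}"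

text \<open>Joint strategies of k robots (robots indexed 0..k-1): str t i is the position of
 robot i at time t; only t \<ge> 0 and i < k are relevant.\<close>
definition strategies :: "'v set \<Rightarrow> 'e set \<Rightarrow> ('e \<Rightarrow> 'v \<times> 'v) \<Rightarrow> ('e \<Rightarrow> real) \<Rightarrow> nat \<Rightarrow>
    (real \<Rightarrow> nat \<Rightarrow> ('v, 'e) gpt) set" where
  "strategies V E ends A k =
     {str. (\<forall>t\<ge>0. \<forall>i<k. str t i \<in> gpoints V E A) \<and>
          (\<forall>t\<ge>0. \<forall>t'\<ge>0. \<forall>i<k. gdist V E ends A (str t i) (str t' i) \<le> \<bar>t - t'\<bar>)}"

definition last_visit :: "nat \<Rightarrow> (real \<Rightarrow> nat \<Rightarrow> ('v, 'e) gpt) \<Rightarrow> 'v \<Rightarrow> real \<Rightarrow> real" where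
  "last_visit k str v t =
     (let S = {t'. 0 \<le> t' \<and> t' \<le> t \<and> (\<exists>i<k. str t' i = Vtx v)} in if S = {} then 0 else Sup S)"

definition idle :: "nat \<Rightarrow> (real \<Rightarrow> nat \<Rightarrow> ('v, 'e) gpt) \<Rightarrow> 'v \<Rightarrow> real \<Rightarrow> real" where
  "idle k str v t = t - last_visit k str v t"

definition wlat :: "'v set \<Rightarrow> ('v \<Rightarrow> real) \<Rightarrow> nat \<Rightarrow> (real \<Rightarrow> nat \<Rightarrow> ('v, 'e) gpt) \<Rightarrow> real \<Rightarrow> real" where
  "wlat V phi k str t = Max ((\<lambda>v. phi v * idle k str v t) ` V)"

text \<open>J_T for T \<in> [0, \<infinity>], T given as an extended real.\<close>
definition cost :: "'v set \<Rightarrow> ('v \<Rightarrow> real) \<Rightarrow> nat \<Rightarrow> ereal \<Rightarrow> (real \<Rightarrow> nat \<Rightarrow> ('v, 'e) gpt) \<Rightarrow> ereal" where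
  "cost V phi k T str =
     (if T = \<infinity> then Limsup at_top (\<lambda>t. ereal (wlat V phi k str t))
      else (SUP t\<in>{real_of_ereal T..}. ereal (wlat V phi k str t)))"

definition opt_cost :: "'v set \<Rightarrow> 'e set \<Rightarrow> ('e \<Rightarrow> 'v \<times> 'v) \<Rightarrow> ('e \<Rightarrow> real) \<Rightarrow> ('v \<Rightarrow> real) \<Rightarrow> nat \<Rightarrow> ereal \<Rightarrow> ereal" where
  "opt_cost V E ends A phi k T = (INF str\<in>strategies V E ends A k. cost V phi k T str)"

definition opt_strategies :: "'v set \<Rightarrow> 'e set \<Rightarrow> ('e \<Rightarrow> 'v \<times> 'v) \<Rightarrow> ('e \<Rightarrow> real) \<Rightarrow> ('v \<Rightarrow> real) \<Rightarrow> nat \<Rightarrow> ereal \<Rightarrow>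
    (real \<Rightarrow> nat \<Rightarrow> ('v, 'e) gpt) set" where
  "opt_strategies V E ends A phi k T =
     {str \<in> strategies V E ends A k. cost V phi k T str = opt_cost V E ends A phi k T}"

end

theory Submission
  imports Defs "HOL-Library.Diagonal_Subsequence"
begin

(* Delaying a strategy by r gives a strategy whose cost from time 0 is at most the original
   cost from time r, and costs can only decrease as the horizon T grows; hence the optimal cost
   is the same for every horizon, and a strategy optimal for T1 stays optimal for every T2 > T1.
   For the third part, strategies are 1-Lipschitz maps into the compact metric graph, so a
   minimising sequence has a pointwise convergent subsequence (Arzela-Ascoli), and idle times are
   lower semicontinuous along it: the limit is an optimal strategy. From any start the robots can
   reach the positions of this optimal strategy by time D_G and then copy it. Since the optimal
   strategy revisits every node v at least every J*/phi(v) time units, after time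
   D_G + J*/phi_min every last visit happened after the switch, so nothing was lost. *)

lemma finite_range_imp_constant_subseq:
  assumes "finite F" "\<And>n. f n \<in> F"
  shows "\<exists>c r. strict_mono (r :: nat \<Rightarrow> nat) \<and> (\<forall>n. f (r n) = c)"
proof -
  have "finite (range f)" using assms by (meson finite_subset image_subsetI)
  then obtain a where "infinite {n. f n = f a}"
    using pigeonhole_infinite[OF infinite_UNIV_nat] by auto
  then obtain r :: "nat \<Rightarrow> nat" where "strict_mono r" "\<forall>n. r n \<in> {n. f n = f a}"
    using infinite_enumerate by blast
  then show ?thesis by auto
qed

lemma Limsup_at_top_real:
  fixes f :: "real \<Rightarrow> 'a::complete_lattice"
  shows "Limsup at_top f = (INF r\<in>{0..}. SUP t\<in>{r..}. f t)"
proof (rule antisym)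
  show "Limsup at_top f \<le> (INF r\<in>{0..}. SUP t\<in>{r..}. f t)"
    unfolding Limsup_def by (intro INF_greatest INF_lower2[of "\<lambda>t. _ \<le> t"]) (auto simp: atLeast_def)
  show "(INF r\<in>{0..}. SUP t\<in>{r..}. f t) \<le> Limsup at_top f"
    unfolding Limsup_def
  proof (intro INF_greatest, clarsimp)
    fix P assume "eventually P (at_top :: real filter)"
    then obtain N where N: "\<And>t. N \<le> t \<Longrightarrow> P t" by (auto simp: eventually_at_top_linorder)
    have "(INF r\<in>{0..}. SUP t\<in>{r..}. f t) \<le> (SUP t\<in>{max N 0..}. f t)"
      by (rule INF_lower) simp
    also have "\<dots> \<le> (SUP t\<in>Collect P. f t)" using N by (intro SUP_subset_mono) auto
    finally show "(INF r\<in>{0..}. SUP t\<in>{r..}. f t) \<le> (SUP t\<in>Collect P. f t)" .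
  qed
qed

definition edge_point :: "('e \<Rightarrow> 'v \<times> 'v) \<Rightarrow> ('e \<Rightarrow> real) \<Rightarrow> 'e \<Rightarrow> real \<Rightarrow> ('v, 'e) gpt" where
  "edge_point ends A e u =
     (if u = 0 then Vtx (fst (ends e)) else if u = A e then Vtx (snd (ends e)) else EPt e u)"

locale metric_graph =
  fixes V :: "'v set" and E :: "'e set" and ends :: "'e \<Rightarrow> 'v \<times> 'v"
    and A :: "'e \<Rightarrow> real" and phi :: "'v \<Rightarrow> real"
  assumes wf: "wf_graph V E ends A phi"
begin

abbreviation "GP \<equiv> gpoints V E A"
abbreviation "walk \<equiv> gwalk V E ends A"
abbreviation "d \<equiv> gdist V E ends A"
abbreviation "pt \<equiv> edge_point ends A"

lemma finite_V: "finite V" and V_nonempty: "V \<noteq> {}" and finite_E: "finite E"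
  and ends_in_V: "e \<in> E \<Longrightarrow> fst (ends e) \<in> V \<and> snd (ends e) \<in> V"
  and length_pos: "e \<in> E \<Longrightarrow> 0 < A e"
  and weight_pos: "v \<in> V \<Longrightarrow> 0 < phi v"
  and connected: "u \<in> V \<Longrightarrow> v \<in> V \<Longrightarrow>
        (u, v) \<in> {(a, b). \<exists>e\<in>E. ends e = (a, b) \<or> ends e = (b, a)}\<^sup>*"
  using wf unfolding wf_graph_def by auto

lemma Vtx_in_GP [simp]: "Vtx v \<in> GP \<longleftrightarrow> v \<in> V"
  by (auto simp: gpoints_def)

lemma gpos_imp_edge_point:
  assumes "e \<in> E" "s \<in> gpos ends A x e"
  shows "x \<in> GP \<and> 0 \<le> s \<and> s \<le> A e \<and> x = pt e s"
  using assms length_pos[OF assms(1)] ends_in_V[OF assms(1)]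
  by (cases x) (auto simp: gpoints_def edge_point_def split: if_splits)

lemma edge_point_in_gpos:
  assumes "e \<in> E" "0 \<le> u" "u \<le> A e"
  shows "pt e u \<in> GP \<and> u \<in> gpos ends A (pt e u) e"
  using assms length_pos[OF assms(1)] ends_in_V[OF assms(1)]
  by (auto simp: gpoints_def edge_point_def)

section \<open>Walks and the shortest-path metric\<close>

lemma walk_refl: "x \<in> GP \<Longrightarrow> walk x x 0"
  by (rule gwalk.refl)

lemma walkD: "walk x z c \<Longrightarrow> x \<in> GP \<and> z \<in> GP \<and> 0 \<le> c"
  by (induction rule: gwalk.induct) (auto dest: gpos_imp_edge_point)

lemma walk_trans: "walk x y c1 \<Longrightarrow> walk y z c2 \<Longrightarrow> walk x z (c1 + c2)"
proof (induction arbitrary: z c2 rule: gwalk.induct)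
  case (refl x)
  then show ?case by simp
next
  case (step e s x t y z' c)
  have "walk x z (\<bar>s - t\<bar> + (c + c2))"
    using gwalk.step[OF step(1-3) step.IH[OF step.prems]] .
  then show ?case by (simp add: add.assoc)
qed

lemma walk_edge:
  assumes "e \<in> E" "s \<in> gpos ends A x e" "t \<in> gpos ends A y e"
  shows "walk x y \<bar>s - t\<bar>"
proof -
  have "y \<in> GP" using gpos_imp_edge_point[OF assms(1,3)] by blast
  from gwalk.step[OF assms walk_refl[OF this]] show ?thesis by simp
qed

lemma walk_sym: "walk x z c \<Longrightarrow> walk z x c"
proof (induction rule: gwalk.induct)
  case (refl x)
  then show ?case by (rule walk_refl)
next
  case (step e s x t y z c)
  from walk_trans[OF step.IH walk_edge[OF step(1,3,2)]] show ?case
    by (simp add: abs_minus_commute add.commute)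
qed

lemma walk_between_nodes:
  assumes "u \<in> V" "v \<in> V"
  shows "\<exists>c. walk (Vtx u) (Vtx v) c"
  using connected[OF assms] assms(2)
proof (induction rule: converse_rtrancl_induct)
  case base
  then show ?case using walk_refl[of "Vtx v"] by auto
next
  case (step a w)
  then obtain c where c: "walk (Vtx w) (Vtx v) c" by auto
  from step(1) obtain e where e: "e \<in> E"
    "fst (ends e) = a \<and> snd (ends e) = w \<or> fst (ends e) = w \<and> snd (ends e) = a" by auto
  then have "0 \<in> gpos ends A (Vtx a) e \<and> A e \<in> gpos ends A (Vtx w) e \<or>
      A e \<in> gpos ends A (Vtx a) e \<and> 0 \<in> gpos ends A (Vtx w) e" by auto
  then obtain s t where "s \<in> gpos ends A (Vtx a) e" "t \<in> gpos ends A (Vtx w) e" by blast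
  from gwalk.step[OF e(1) this c] show ?case by blast
qed

lemma walk_to_node:
  assumes "x \<in> GP"
  shows "\<exists>v\<in>V. \<exists>c \<le> Max (insert 0 (A ` E)). walk x (Vtx v) c"
proof (cases x)
  case (Vtx v)
  moreover have "0 \<le> Max (insert 0 (A ` E))" using finite_E by simp
  ultimately show ?thesis using assms walk_refl[OF assms] by auto
next
  case (EPt e s)
  then have es: "e \<in> E" "0 < s" "s < A e" using assms by (auto simp: gpoints_def)
  have "s \<in> gpos ends A x e" "0 \<in> gpos ends A (Vtx (fst (ends e))) e" using es EPt by auto
  from walk_edge[OF es(1) this] have "walk x (Vtx (fst (ends e))) s" using es by simp
  moreover have "A e \<le> Max (insert 0 (A ` E))" using es(1) finite_E by simp
  then have "s \<le> Max (insert 0 (A ` E))" using es by linarith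
  ultimately show ?thesis using ends_in_V[OF es(1)] by blast
qed

lemma walk_exists:
  assumes "x \<in> GP" "y \<in> GP"
  shows "\<exists>c. walk x y c"
proof -
  obtain u c1 where u: "u \<in> V" "walk x (Vtx u) c1" using walk_to_node[OF assms(1)] by blast
  obtain w c2 where w: "w \<in> V" "walk y (Vtx w) c2" using walk_to_node[OF assms(2)] by blast
  obtain c3 where "walk (Vtx u) (Vtx w) c3" using walk_between_nodes[OF u(1) w(1)] by blast
  from walk_trans[OF u(2) walk_trans[OF this walk_sym[OF w(2)]]] show ?thesis by blast
qed

lemma gdist_le_walk: "walk x y c \<Longrightarrow> d x y \<le> c"
  unfolding gdist_def by (rule cInf_lower) (auto intro!: bdd_belowI[of _ 0] dest: walkD)

lemma gdist_less_walk:
  assumes "x \<in> GP" "y \<in> GP" "d x y < b"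
  shows "\<exists>c < b. walk x y c"
  using cInf_lessD[of "Collect (walk x y)" b] walk_exists[OF assms(1,2)] assms(3)
  unfolding gdist_def by auto

lemma gdist_nonneg: "x \<in> GP \<Longrightarrow> y \<in> GP \<Longrightarrow> 0 \<le> d x y"
  unfolding gdist_def using walk_exists by (auto intro!: cInf_greatest dest: walkD)

lemma gdist_self [simp]: "x \<in> GP \<Longrightarrow> d x x = 0"
  using gdist_le_walk[OF walk_refl] gdist_nonneg by (meson antisym)

lemma gdist_commute: "d x y = d y x"
proof -
  have "Collect (walk x y) = Collect (walk y x)" using walk_sym by blast
  then show ?thesis unfolding gdist_def by simp
qed

lemma gdist_edge_points:
  assumes "e \<in> E" "u \<in> {0..A e}" "w \<in> {0..A e}"
  shows "d (pt e u) (pt e w) \<le> \<bar>u - w\<bar>"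
  using assms edge_point_in_gpos gdist_le_walk[OF walk_edge] by simp

lemma gdist_triangle:
  assumes "x \<in> GP" "y \<in> GP" "z \<in> GP"
  shows "d x z \<le> d x y + d y z"
proof (rule field_le_epsilon)
  fix \<epsilon> :: real assume "0 < \<epsilon>"
  then obtain c1 c2 where "walk x y c1" "c1 < d x y + \<epsilon> / 2" "walk y z c2" "c2 < d y z + \<epsilon> / 2"
    using gdist_less_walk[of x y] gdist_less_walk[of y z] assms by (meson half_gt_zero less_add_same_cancel1)
  then show "d x z \<le> d x y + d y z + \<epsilon>"
    using gdist_le_walk[OF walk_trans] by fastforce
qed

definition lipschitz1_on :: "real set \<Rightarrow> (real \<Rightarrow> ('v, 'e) gpt) \<Rightarrow> bool" where
  "lipschitz1_on S p \<longleftrightarrow> (\<forall>a\<in>S. p a \<in> GP) \<and> (\<forall>a\<in>S. \<forall>b\<in>S. d (p a) (p b) \<le> \<bar>a - b\<bar>)"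

lemma lipschitz1_onD:
  "lipschitz1_on S p \<Longrightarrow> a \<in> S \<Longrightarrow> p a \<in> GP"
  "lipschitz1_on S p \<Longrightarrow> a \<in> S \<Longrightarrow> b \<in> S \<Longrightarrow> d (p a) (p b) \<le> \<bar>a - b\<bar>"
  unfolding lipschitz1_on_def by auto

lemma lipschitz1_on_subset: "lipschitz1_on T p \<Longrightarrow> S \<subseteq> T \<Longrightarrow> lipschitz1_on S p"
  unfolding lipschitz1_on_def by blast

lemma lipschitz1_on_agree: "lipschitz1_on S p \<Longrightarrow> (\<And>a. a \<in> S \<Longrightarrow> q a = p a) \<Longrightarrow> lipschitz1_on S q"
  unfolding lipschitz1_on_def by simp

lemma lipschitz1_on_translate: "lipschitz1_on ((+) r ` S) p \<longleftrightarrow> lipschitz1_on S (\<lambda>a. p (r + a))"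
  unfolding lipschitz1_on_def by auto

lemma lipschitz1_on_const: "x \<in> GP \<Longrightarrow> lipschitz1_on S (\<lambda>_. x)"
  unfolding lipschitz1_on_def by simp

lemma lipschitz1_on_Un:
  assumes "lipschitz1_on S p" "lipschitz1_on T p" "m \<in> S" "m \<in> T" "\<forall>a\<in>S. a \<le> m" "\<forall>b\<in>T. m \<le> b"
  shows "lipschitz1_on (S \<union> T) p"
proof -
  have cross: "d (p a) (p b) \<le> \<bar>a - b\<bar>" if "a \<in> S" "b \<in> T" for a b
  proof -
    have "d (p a) (p b) \<le> d (p a) (p m) + d (p m) (p b)"
      using assms that by (intro gdist_triangle) (auto simp: lipschitz1_on_def)
    also have "\<dots> \<le> \<bar>a - m\<bar> + \<bar>m - b\<bar>"
      using assms(1-4) that unfolding lipschitz1_on_def by (intro add_mono) blast+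
    also have "\<dots> = \<bar>a - b\<bar>" using assms(5,6) that by fastforce
    finally show ?thesis .
  qed
  have "d (p a) (p b) \<le> \<bar>a - b\<bar>" if "a \<in> S \<union> T" "b \<in> S \<union> T" for a b
    using that assms(1,2) cross[of a b] cross[of b a] gdist_commute[of "p a" "p b"]
    unfolding lipschitz1_on_def by (auto simp: abs_minus_commute)
  then show ?thesis using assms(1,2) unfolding lipschitz1_on_def by blast
qed

lemma lipschitz1_on_glue:
  assumes "lipschitz1_on {0..D} f" "lipschitz1_on {D..} g" "f D = g D" "0 \<le> D"
  shows "lipschitz1_on {0..} (\<lambda>t. if t \<le> D then f t else g t)"
proof -
  have "lipschitz1_on {0..D} (\<lambda>t. if t \<le> D then f t else g t)"
    by (rule lipschitz1_on_agree[OF assms(1)]) simp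
  moreover have "lipschitz1_on {D..} (\<lambda>t. if t \<le> D then f t else g t)"
    by (rule lipschitz1_on_agree[OF assms(2)]) (use assms(3) in auto)
  ultimately have "lipschitz1_on ({0..D} \<union> {D..}) (\<lambda>t. if t \<le> D then f t else g t)"
    using assms(4) by (intro lipschitz1_on_Un[where m = D]) auto
  moreover have "{0..D} \<union> {D..} = {0..}" using assms(4) by auto
  ultimately show ?thesis by simp
qed

lemma edge_segment_path:
  assumes "e \<in> E" "s \<in> {0..A e}" "t \<in> {0..A e}"
  shows "\<exists>q. q 0 = pt e s \<and> q \<bar>s - t\<bar> = pt e t \<and> lipschitz1_on {0..\<bar>s - t\<bar>} q"
proof -
  define pos where "pos a = (if s \<le> t then s + a else s - a)" for a
  have pos: "pos a \<in> {0..A e}" if "a \<in> {0..\<bar>s - t\<bar>}" for a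
    using assms(2,3) that by (auto simp: pos_def)
  have "lipschitz1_on {0..\<bar>s - t\<bar>} (\<lambda>a. pt e (pos a))"
    unfolding lipschitz1_on_def
  proof (intro conjI ballI)
    fix a b assume "a \<in> {0..\<bar>s - t\<bar>}" "b \<in> {0..\<bar>s - t\<bar>}"
    then have "pos a \<in> {0..A e}" "pos b \<in> {0..A e}" using pos by blast+
    then show "pt e (pos a) \<in> GP" using edge_point_in_gpos[OF assms(1)] by simp
    have "d (pt e (pos a)) (pt e (pos b)) \<le> \<bar>pos a - pos b\<bar>"
      using gdist_edge_points[OF assms(1)] \<open>pos a \<in> {0..A e}\<close> \<open>pos b \<in> {0..A e}\<close> by blast
    also have "\<bar>pos a - pos b\<bar> = \<bar>a - b\<bar>" by (auto simp: pos_def)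
    finally show "d (pt e (pos a)) (pt e (pos b)) \<le> \<bar>a - b\<bar>" .
  qed
  moreover have "pos 0 = s" "pos \<bar>s - t\<bar> = t" by (auto simp: pos_def)
  ultimately show ?thesis by (intro exI[of _ "\<lambda>a. pt e (pos a)"]) auto
qed

lemma walk_imp_path:
  "walk x z c \<Longrightarrow> \<exists>p. p 0 = x \<and> (\<forall>a\<ge>c. p a = z) \<and> lipschitz1_on {0..} p"
proof (induction rule: gwalk.induct)
  case (refl x)
  then show ?case using lipschitz1_on_const[OF refl] by (intro exI[of _ "\<lambda>_. x"]) auto
next
  case (step e s x t y z c)
  obtain p where p: "p 0 = y" "\<forall>a\<ge>c. p a = z" "lipschitz1_on {0..} p"
    using step.IH by blast
  have s: "s \<in> {0..A e}" "x = pt e s" and t: "t \<in> {0..A e}" "y = pt e t"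
    using gpos_imp_edge_point[OF step(1,2)] gpos_imp_edge_point[OF step(1,3)] by auto
  define \<delta> where "\<delta> = \<bar>s - t\<bar>"
  obtain q where q: "q 0 = x" "q \<delta> = y" "lipschitz1_on {0..\<delta>} q"
    using edge_segment_path[OF step(1) s(1) t(1)] s(2) t(2) unfolding \<delta>_def by blast
  have "lipschitz1_on {\<delta>..} (\<lambda>a. p (a - \<delta>))"
    using lipschitz1_on_translate[of \<delta> "{0..}" "\<lambda>a. p (a - \<delta>)"] p(3) by simp
  then have "lipschitz1_on {0..} (\<lambda>a. if a \<le> \<delta> then q a else p (a - \<delta>))"
    using q p(1) by (intro lipschitz1_on_glue) (auto simp: \<delta>_def)
  moreover have "(if a \<le> \<delta> then q a else p (a - \<delta>)) = z" if "\<delta> + c \<le> a" for a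
  proof (cases "a \<le> \<delta>")
    case True
    then have "a = \<delta>" "c = 0" using that walkD[OF step(4)] by auto
    then show ?thesis using p(1,2) q(2) by auto
  qed (use that p(2) in auto)
  ultimately show ?case
    using q(1) by (intro exI[of _ "\<lambda>a. if a \<le> \<delta> then q a else p (a - \<delta>)"]) (simp add: \<delta>_def)
qed

section \<open>Convergence and compactness\<close>

text \<open>A lower bound for the distance to \<open>v\<close> that is positive away from \<open>v\<close>: the distance to \<open>v\<close>
  inside the closed edge carrying \<open>x\<close>, truncated at \<open>m\<close>.\<close>

definition node_gauge :: "real \<Rightarrow> 'v \<Rightarrow> ('v, 'e) gpt \<Rightarrow> real" where
  "node_gauge m v x = (case x of
      Vtx u \<Rightarrow> if u = v then 0 else m
    | EPt e s \<Rightarrow> min m (min (if fst (ends e) = v then s else m) (if snd (ends e) = v then A e - s else m)))"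

lemma node_gauge_edge_point:
  assumes "e \<in> E" "0 \<le> u" "u \<le> A e" "0 < m" "m \<le> A e"
  shows "node_gauge m v (pt e u) =
    min m (min (if fst (ends e) = v then u else m) (if snd (ends e) = v then A e - u else m))"
  using assms length_pos[OF assms(1)]
  by (cases "fst (ends e) = v"; cases "snd (ends e) = v")
    (auto simp: edge_point_def node_gauge_def min_def)

lemma node_gauge_walk:
  assumes "0 < m" "\<forall>e\<in>E. m \<le> A e"
  shows "walk x z c \<Longrightarrow> node_gauge m v x \<le> node_gauge m v z + c"
proof (induction rule: gwalk.induct)
  case (refl x)
  then show ?case by simp
next
  case (step e s x t y z c)
  have s: "0 \<le> s" "s \<le> A e" "x = pt e s" and t: "0 \<le> t" "t \<le> A e" "y = pt e t"
    using gpos_imp_edge_point[OF step(1,2)] gpos_imp_edge_point[OF step(1,3)] by auto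
  have "node_gauge m v x \<le> node_gauge m v y + \<bar>s - t\<bar>"
    unfolding s(3) t(3) node_gauge_edge_point[OF step(1) s(1,2) assms(1) assms(2)[rule_format, OF step(1)]]
      node_gauge_edge_point[OF step(1) t(1,2) assms(1) assms(2)[rule_format, OF step(1)]]
    by (auto simp: min_def abs_if)
  then show ?case using step.IH by linarith
qed

lemma gdist_node_le_0_imp_eq:
  assumes "x \<in> GP" "v \<in> V" "d x (Vtx v) \<le> 0"
  shows "x = Vtx v"
proof (rule ccontr)
  assume "x \<noteq> Vtx v"
  define m where "m = Min (insert 1 (A ` E))"
  have m: "0 < m" "\<forall>e\<in>E. m \<le> A e"
    unfolding m_def using finite_E length_pos by (auto simp: Min_gr_iff)
  have "node_gauge m v x \<le> d x (Vtx v)"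
    unfolding gdist_def using walk_exists[OF assms(1)] assms(2)
    by (intro cInf_greatest) (auto dest!: node_gauge_walk[OF m, of _ _ _ v] simp: node_gauge_def)
  moreover have "0 < node_gauge m v x"
    using assms(1) \<open>x \<noteq> Vtx v\<close> m(1) by (auto simp: gpoints_def node_gauge_def split: if_splits)
  ultimately show False using assms(3) by simp
qed

definition converges_to :: "(nat \<Rightarrow> ('v, 'e) gpt) \<Rightarrow> ('v, 'e) gpt \<Rightarrow> bool" where
  "converges_to y l \<longleftrightarrow> range y \<subseteq> GP \<and> l \<in> GP \<and> (\<lambda>n. d (y n) l) \<longlonglongrightarrow> 0"

lemma converges_to_subseq: "converges_to y l \<Longrightarrow> strict_mono r \<Longrightarrow> converges_to (y \<circ> r) l"
  unfolding converges_to_def using LIMSEQ_subseq_LIMSEQ by (fastforce simp: o_def)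

lemma converges_to_const: "l \<in> GP \<Longrightarrow> converges_to (\<lambda>_. l) l"
  unfolding converges_to_def by simp

lemma gdist_limit_le:
  assumes "converges_to x l" "converges_to y l'" "\<And>n. d (x n) (y n) \<le> c n" "c \<longlonglongrightarrow> c0"
  shows "d l l' \<le> c0"
proof (rule LIMSEQ_le_const)
  show "(\<lambda>n. d (x n) l + c n + d (y n) l') \<longlonglongrightarrow> c0"
    using tendsto_add[OF tendsto_add[OF _ assms(4)]] assms(1,2) unfolding converges_to_def by force
  have "d l l' \<le> d (x n) l + c n + d (y n) l'" for n
  proof -
    have pts: "x n \<in> GP" "y n \<in> GP" "l \<in> GP" "l' \<in> GP"
      using assms(1,2) unfolding converges_to_def by auto
    have "d l l' \<le> d l (x n) + d (x n) (y n) + d (y n) l'"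
      using gdist_triangle[OF pts(3,1,4)] gdist_triangle[OF pts(1,2,4)] by linarith
    then show ?thesis using assms(3)[of n] by (simp add: gdist_commute)
  qed
  then show "\<exists>N. \<forall>n\<ge>N. d l l' \<le> d (x n) l + c n + d (y n) l'" by blast
qed

lemma edge_points_seq_compact:
  fixes s :: "nat \<Rightarrow> real"
  assumes "e \<in> E" "\<And>n. s n \<in> {0..A e}"
  shows "\<exists>a r. strict_mono r \<and> converges_to (\<lambda>n. pt e (s (r n))) (pt e a)"
proof -
  have "seq_compact {0..A e}" by (simp add: compact_imp_seq_compact)
  moreover have "\<forall>n. s n \<in> {0..A e}" using assms(2) by blast
  ultimately obtain a and r :: "nat \<Rightarrow> nat" where a: "a \<in> {0..A e}" "strict_mono r" "(s \<circ> r) \<longlonglongrightarrow> a"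
    by (rule seq_compactE)
  have pts: "pt e u \<in> GP" if "u \<in> {0..A e}" for u
    using edge_point_in_gpos[OF assms(1)] that by simp
  have bound: "norm (d (pt e (s (r n))) (pt e a)) \<le> \<bar>s (r n) - a\<bar>" for n
    using gdist_edge_points[OF assms(1,2) a(1)] gdist_nonneg[OF pts[OF assms(2)] pts[OF a(1)]] by simp
  have "(\<lambda>n. \<bar>s (r n) - a\<bar>) \<longlonglongrightarrow> 0"
    using tendsto_rabs_zero[OF LIM_zero[OF a(3)]] by (simp add: o_def)
  then have "(\<lambda>n. d (pt e (s (r n))) (pt e a)) \<longlonglongrightarrow> 0"
    by (rule Lim_null_comparison[OF always_eventually, rotated]) (use bound in blast)
  then show ?thesis using a(1,2) pts assms(2) unfolding converges_to_def by blast
qed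

lemma gpoints_seq_compact:
  fixes x :: "nat \<Rightarrow> ('v, 'e) gpt"
  assumes "range x \<subseteq> GP"
  shows "\<exists>l r. strict_mono r \<and> converges_to (x \<circ> r) l"
proof -
  have x: "x n \<in> GP" for n using assms by auto
  define carrier where "carrier n = (case x n of Vtx v \<Rightarrow> Inl v | EPt e s \<Rightarrow> Inr e)" for n
  have "carrier n \<in> Inl ` V \<union> Inr ` E" for n
    using x[of n] by (cases "x n") (auto simp: carrier_def gpoints_def)
  then obtain r :: "nat \<Rightarrow> nat" and c where r: "strict_mono r" "\<And>n. carrier (r n) = c"
    using finite_range_imp_constant_subseq[of "Inl ` V \<union> Inr ` E" carrier] finite_V finite_E by blast
  show ?thesis
  proof (cases c)
    case (Inl v)
    have "x (r n) = Vtx v" for n using r(2)[of n] Inl by (cases "x (r n)") (simp_all add: carrier_def)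
    moreover have "Vtx v \<in> GP" using x[of "r 0"] calculation[of 0] by simp
    ultimately have "converges_to (x \<circ> r) (Vtx v)" using converges_to_const by (simp add: o_def)
    then show ?thesis using r(1) by blast
  next
    case (Inr e)
    have "\<exists>s. x (r n) = EPt e s \<and> 0 < s \<and> s < A e" for n
      using r(2)[of n] Inr x[of "r n"] by (cases "x (r n)") (auto simp: carrier_def gpoints_def)
    then obtain s where s: "\<And>n. x (r n) = EPt e (s n) \<and> 0 < s n \<and> s n < A e" by metis
    have e: "e \<in> E" using x[of "r 0"] s[of 0] by (auto simp: gpoints_def)
    have x_pt: "x (r n) = pt e (s n)" and "s n \<in> {0..A e}" for n
      using s[of n] by (simp_all add: edge_point_def)
    then obtain a and r' :: "nat \<Rightarrow> nat"
      where r': "strict_mono r'" "converges_to (\<lambda>n. pt e (s (r' n))) (pt e a)"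
      using edge_points_seq_compact[OF e] by blast
    then have "converges_to (x \<circ> (r \<circ> r')) (pt e a)" by (simp add: o_def x_pt)
    moreover have "strict_mono (r \<circ> r')" using r(1) r'(1) by (rule strict_mono_o)
    ultimately show ?thesis by blast
  qed
qed

lemma gdist_bounded: "\<exists>B. \<forall>x\<in>GP. \<forall>y\<in>GP. d x y \<le> B"
proof -
  define M where "M = Max (insert 0 (A ` E))"
  define W where "W = Max ((\<lambda>(u, w). d (Vtx u) (Vtx w)) ` (V \<times> V))"
  have "d x y \<le> M + W + M" if xy: "x \<in> GP" "y \<in> GP" for x y
  proof -
    obtain u c1 where u: "u \<in> V" "walk x (Vtx u) c1" "c1 \<le> M"
      using walk_to_node[OF xy(1)] M_def by blast
    obtain w c2 where w: "w \<in> V" "walk y (Vtx w) c2" "c2 \<le> M"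
      using walk_to_node[OF xy(2)] M_def by blast
    have "d x y \<le> d x (Vtx u) + d (Vtx u) (Vtx w) + d (Vtx w) y"
      using gdist_triangle[of x "Vtx u" y] gdist_triangle[of "Vtx u" "Vtx w" y] xy u(1) w(1)
      by fastforce
    moreover have "d (Vtx u) (Vtx w) \<le> W"
      unfolding W_def using finite_V u(1) w(1) by (intro Max_ge) auto
    ultimately show ?thesis
      using gdist_le_walk[OF u(2)] gdist_le_walk[OF walk_sym[OF w(2)]] u(3) w(3) by linarith
  qed
  then show ?thesis by blast
qed

lemma gdist_le_diam:
  assumes "x \<in> GP" "y \<in> GP"
  shows "d x y \<le> gdiam V E ends A"
proof -
  obtain B where "\<forall>x\<in>GP. \<forall>y\<in>GP. d x y \<le> B" using gdist_bounded by blast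
  then show ?thesis
    unfolding gdiam_def using assms by (intro cSup_upper) (auto intro!: bdd_aboveI[of _ B])
qed

lemma diam_nonneg: "0 \<le> gdiam V E ends A"
  using gdist_le_diam[of "Vtx v" "Vtx v" for v] V_nonempty by fastforce

lemma converges_to_offset:
  assumes "range y \<subseteq> GP" "converges_to (\<lambda>n. y (k + n)) l"
  shows "converges_to y l"
  using assms LIMSEQ_offset[of "\<lambda>n. d (y n) l" k] unfolding converges_to_def by (simp add: add.commute)

lemma diagonal_convergent_subseq:
  fixes x :: "'j::countable \<Rightarrow> nat \<Rightarrow> ('v, 'e) gpt"
  assumes "\<And>j. j \<in> J \<Longrightarrow> range (x j) \<subseteq> GP"
  shows "\<exists>r. strict_mono r \<and> (\<forall>j\<in>J. \<exists>l. converges_to (x j \<circ> r) l)"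
proof -
  define P where "P n s \<longleftrightarrow> (from_nat n \<in> J \<longrightarrow> (\<exists>l. converges_to (x (from_nat n) \<circ> s) l))"
    for n and s :: "nat \<Rightarrow> nat"
  interpret subseqs P
  proof
    fix n and s :: "nat \<Rightarrow> nat"
    show "\<exists>r'. strict_mono r' \<and> P n (s \<circ> r')"
    proof (cases "from_nat n \<in> J")
      case True
      then have "range (x (from_nat n) \<circ> s) \<subseteq> GP" using assms by auto
      then obtain l r' where "strict_mono r'" "converges_to (x (from_nat n) \<circ> s \<circ> r') l"
        using gpoints_seq_compact by blast
      then show ?thesis unfolding P_def by (auto simp: comp_assoc)
    next
      case False
      then show ?thesis unfolding P_def using strict_mono_id by blast
    qed
  qed
  have "\<exists>l. converges_to (x j \<circ> diagseq) l" if j: "j \<in> J" for j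
  proof -
    have "P (to_nat j) (diagseq \<circ> (+) (Suc (to_nat j)))"
      by (rule diagseq_holds) (fastforce simp: P_def comp_assoc[symmetric] intro: converges_to_subseq)
    then obtain l where "converges_to (\<lambda>n. (x j \<circ> diagseq) (Suc (to_nat j) + n)) l"
      using j unfolding P_def by (auto simp: o_def)
    moreover have "range (x j \<circ> diagseq) \<subseteq> GP" using assms[OF j] by auto
    ultimately show ?thesis using converges_to_offset by blast
  qed
  then show ?thesis using subseq_diagseq by blast
qed

lemma converges_to_approx:
  assumes "range x \<subseteq> GP" "l \<in> GP"
    and approx: "\<And>\<epsilon>. 0 < \<epsilon> \<Longrightarrow> \<exists>y l'. converges_to y l' \<and> d l' l \<le> \<epsilon> \<and> (\<forall>n. d (x n) (y n) \<le> \<epsilon>)"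
  shows "converges_to x l"
proof -
  have "(\<lambda>n. d (x n) l) \<longlonglongrightarrow> 0"
  proof (rule LIMSEQ_I)
    fix \<epsilon> :: real assume "0 < \<epsilon>"
    then obtain y l' where y: "converges_to y l'" "d l' l \<le> \<epsilon> / 3" "\<And>n. d (x n) (y n) \<le> \<epsilon> / 3"
      using approx[of "\<epsilon> / 3"] by auto
    then obtain N where N: "\<And>n. N \<le> n \<Longrightarrow> d (y n) l' < \<epsilon> / 3"
      using order_tendstoD(2)[of _ 0 sequentially "\<epsilon> / 3"] \<open>0 < \<epsilon>\<close>
      unfolding converges_to_def eventually_sequentially by force
    have pts: "x n \<in> GP" "y n \<in> GP" "l' \<in> GP" for n
      using assms(1) y(1) unfolding converges_to_def by auto
    have tri: "d (x n) l \<le> d (x n) (y n) + d (y n) l' + d l' l" for n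
      using gdist_triangle[OF pts(1)[of n] pts(2)[of n] assms(2)] gdist_triangle[OF pts(2)[of n] pts(3) assms(2)]
      by linarith
    have "d (x n) l < \<epsilon>" if "N \<le> n" for n
      using tri[of n] y(2) y(3)[of n] N[OF that] by linarith
    moreover have "0 \<le> d (x n) l" for n using gdist_nonneg[OF pts(1) assms(2)] .
    ultimately show "\<exists>N. \<forall>n\<ge>N. norm (d (x n) l - 0) < \<epsilon>" by auto
  qed
  then show ?thesis using assms(1,2) unfolding converges_to_def by blast
qed

lemma lipschitz1_converges_everywhere:
  fixes y :: "nat \<Rightarrow> real \<Rightarrow> ('v, 'e) gpt"
  assumes lip: "\<And>m. lipschitz1_on {0..} (y m)"
    and rat: "\<And>q. 0 \<le> q \<Longrightarrow> \<exists>l. converges_to (\<lambda>m. y m (of_rat q)) l"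
    and t: "0 \<le> t"
  shows "\<exists>l. converges_to (\<lambda>m. y m t) l"
proof -
  have pts: "y m u \<in> GP" if "0 \<le> u" for m u
    using lipschitz1_onD[OF lip] that by simp
  have near: "d (y m t) (y m u) \<le> u - t" if "t \<le> u" for m u
    using lipschitz1_onD(2)[OF lip, of t u m] that t by simp
  obtain l r where r: "strict_mono r" and l: "converges_to ((\<lambda>m. y m t) \<circ> r) l"
    using gpoints_seq_compact[of "\<lambda>m. y m t"] pts[OF t] by blast
  \<comment> \<open>Near \<open>t\<close> there is a rational time at which the whole sequence converges.\<close>
  have approx: "\<exists>y' l'. converges_to y' l' \<and> d l' l \<le> \<epsilon> \<and> (\<forall>m. d (y m t) (y' m) \<le> \<epsilon>)"
    if "0 < \<epsilon>" for \<epsilon>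
  proof -
    obtain q where q: "t < of_rat q" "of_rat q < t + \<epsilon>"
      using of_rat_dense[of t "t + \<epsilon>"] \<open>0 < \<epsilon>\<close> by auto
    then have "0 \<le> (of_rat q :: real)" using t by linarith
    then have "0 \<le> q" by simp
    then obtain l' where l': "converges_to (\<lambda>m. y m (of_rat q)) l'" using rat by blast
    have "d (y m (of_rat q)) (y m t) \<le> of_rat q - t" for m
      using near[of "of_rat q" m] q(1) by (subst gdist_commute) simp
    then have "d l' l \<le> of_rat q - t"
      using gdist_limit_le[OF converges_to_subseq[OF l' r] l, of "\<lambda>_. of_rat q - t"] by (simp add: o_def)
    moreover have "d (y m t) (y m (of_rat q)) \<le> \<epsilon>" for m
      using near[of "of_rat q" m] q by simp
    ultimately show ?thesis using l' q(2) by (intro exI[of _ "\<lambda>m. y m (of_rat q)"] exI[of _ l']) simp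
  qed
  have "range (\<lambda>m. y m t) \<subseteq> GP" "l \<in> GP" using pts[OF t] l unfolding converges_to_def by auto
  from converges_to_approx[OF this approx] show ?thesis by blast
qed

end

locale patrol = metric_graph V E ends A phi
  for V :: "'v set" and E :: "'e set" and ends A phi +
  fixes k :: nat
begin

abbreviation "Strat \<equiv> strategies V E ends A k"
abbreviation "J \<equiv> cost V phi k"
abbreviation "Jopt \<equiv> opt_cost V E ends A phi k"

lemma strategies_iff: "\<pi> \<in> Strat \<longleftrightarrow> (\<forall>i<k. lipschitz1_on {0..} (\<lambda>t. \<pi> t i))"
  unfolding strategies_def lipschitz1_on_def by auto

lemma visit_le_last_visit:
  assumes "0 \<le> b" "b \<le> t" "i < k" "\<pi> b i = Vtx v"
  shows "b \<le> last_visit k \<pi> v t"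
  using assms unfolding last_visit_def Let_def
  by (auto intro!: cSup_upper bdd_aboveI[of _ t])

lemma last_visit_nonneg: "0 \<le> last_visit k \<pi> v t"
proof (cases "\<exists>b\<in>{0..t}. \<exists>i<k. \<pi> b i = Vtx v")
  case True
  then obtain b i where "b \<in> {0..t}" "i < k" "\<pi> b i = Vtx v" by blast
  then show ?thesis using visit_le_last_visit[of b t i \<pi> v] by auto
next
  case False
  then have "{s. 0 \<le> s \<and> s \<le> t \<and> (\<exists>i<k. \<pi> s i = Vtx v)} = {}" by auto
  then show ?thesis by (simp add: last_visit_def)
qed

lemma last_visit_le:
  assumes "0 \<le> t"
  shows "last_visit k \<pi> v t \<le> t"
proof -
  define S where "S = {s. 0 \<le> s \<and> s \<le> t \<and> (\<exists>i<k. \<pi> s i = Vtx v)}"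
  have "S \<noteq> {} \<Longrightarrow> Sup S \<le> t" by (rule cSup_least) (auto simp: S_def)
  then show ?thesis using assms unfolding last_visit_def Let_def S_def[symmetric] by auto
qed

lemma less_last_visit_iff:
  assumes "0 \<le> a"
  shows "a < last_visit k \<pi> v t \<longleftrightarrow> (\<exists>b\<in>{a<..t}. \<exists>i<k. \<pi> b i = Vtx v)"
proof -
  define S where "S = {s. 0 \<le> s \<and> s \<le> t \<and> (\<exists>i<k. \<pi> s i = Vtx v)}"
  have lv: "last_visit k \<pi> v t = (if S = {} then 0 else Sup S)"
    by (simp only: last_visit_def Let_def S_def)
  have bdd: "bdd_above S" unfolding S_def by (auto intro!: bdd_aboveI[of _ t])
  show ?thesis
  proof
    assume "a < last_visit k \<pi> v t"
    then have "S \<noteq> {}" "a < Sup S" using assms lv by (auto split: if_splits)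
    then obtain b where "b \<in> S" "a < b" using less_cSupD by blast
    then show "\<exists>b\<in>{a<..t}. \<exists>i<k. \<pi> b i = Vtx v" by (auto simp: S_def)
  next
    assume "\<exists>b\<in>{a<..t}. \<exists>i<k. \<pi> b i = Vtx v"
    then obtain b where "b \<in> S" "a < b" using assms unfolding S_def by force
    then show "a < last_visit k \<pi> v t" using lv cSup_upper[OF _ bdd] by fastforce
  qed
qed

lemma last_visit_le_if_agree:
  assumes "0 \<le> D" "D < last_visit k \<pi> v t" "\<And>s i. D < s \<Longrightarrow> s \<le> t \<Longrightarrow> i < k \<Longrightarrow> \<sigma> s i = \<pi> s i"
  shows "last_visit k \<pi> v t \<le> last_visit k \<sigma> v t"
proof (rule dense_le_bounded[OF assms(2)])
  fix w assume w: "D < w" "w < last_visit k \<pi> v t"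
  have "0 \<le> w" using assms(1) w(1) by linarith
  then obtain b i where b: "b \<in> {w<..t}" "i < k" "\<pi> b i = Vtx v"
    using w(2) unfolding less_last_visit_iff[OF \<open>0 \<le> w\<close>] by blast
  moreover have "\<sigma> b i = \<pi> b i" using assms(3) b w(1) by simp
  ultimately have "w < last_visit k \<sigma> v t"
    unfolding less_last_visit_iff[OF \<open>0 \<le> w\<close>] by auto
  then show "w \<le> last_visit k \<sigma> v t" by simp
qed

lemma idle_shift_le:
  assumes "0 \<le> r"
  shows "idle k (\<lambda>s. \<pi> (r + s)) v t \<le> idle k \<pi> v (r + t)"
proof -
  let ?\<sigma> = "\<lambda>s. \<pi> (r + s)"
  have "last_visit k \<pi> v (r + t) \<le> r + last_visit k ?\<sigma> v t"
  proof (cases "last_visit k \<pi> v (r + t) \<le> r")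
    case True
    then show ?thesis using last_visit_nonneg[of ?\<sigma> v t] by linarith
  next
    case False
    show ?thesis
    proof (rule dense_le_bounded[of r])
      fix w assume w: "r < w" "w < last_visit k \<pi> v (r + t)"
      have "0 \<le> w" using assms w(1) by linarith
      then obtain b i where "b \<in> {w<..r + t}" "i < k" "\<pi> b i = Vtx v"
        using w(2) unfolding less_last_visit_iff[OF \<open>0 \<le> w\<close>] by blast
      then have "b - r \<in> {w - r<..t}" "i < k" "?\<sigma> (b - r) i = Vtx v" by auto
      moreover have "0 \<le> w - r" using w(1) by simp
      ultimately have "w - r < last_visit k ?\<sigma> v t"
        unfolding less_last_visit_iff[OF \<open>0 \<le> w - r\<close>] by blast
      then show "w \<le> r + last_visit k ?\<sigma> v t" by simp
    qed (use False in simp)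
  qed
  then show ?thesis by (simp add: idle_def)
qed

lemma wlat_le_iff: "wlat V phi k \<pi> t \<le> c \<longleftrightarrow> (\<forall>v\<in>V. phi v * idle k \<pi> v t \<le> c)"
  unfolding wlat_def using finite_V V_nonempty by simp

lemma idle_le_wlat: "v \<in> V \<Longrightarrow> phi v * idle k \<pi> v t \<le> wlat V phi k \<pi> t"
  using wlat_le_iff[of \<pi> t "wlat V phi k \<pi> t"] by simp

lemma wlat_nonneg:
  assumes "0 \<le> t"
  shows "0 \<le> wlat V phi k \<pi> t"
proof -
  obtain v where v: "v \<in> V" using V_nonempty by blast
  have "0 \<le> idle k \<pi> v t"
    using last_visit_le[OF assms] by (simp add: idle_def)
  then have "0 \<le> phi v * idle k \<pi> v t" using weight_pos[OF v] by simp
  then show ?thesis using idle_le_wlat[OF v] by (rule order.trans)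
qed

lemma wlat_shift_le:
  assumes "0 \<le> r"
  shows "wlat V phi k (\<lambda>s. \<pi> (r + s)) t \<le> wlat V phi k \<pi> (r + t)"
  unfolding wlat_le_iff
proof
  fix v assume v: "v \<in> V"
  have "phi v * idle k (\<lambda>s. \<pi> (r + s)) v t \<le> phi v * idle k \<pi> v (r + t)"
    using idle_shift_le[OF assms] weight_pos[OF v] by (simp add: mult_left_mono)
  also have "\<dots> \<le> wlat V phi k \<pi> (r + t)" by (rule idle_le_wlat[OF v])
  finally show "phi v * idle k (\<lambda>s. \<pi> (r + s)) v t \<le> wlat V phi k \<pi> (r + t)" .
qed

section \<open>Independence of the horizon\<close>

lemma cost_finite: "J (ereal T) \<pi> = (SUP t\<in>{T..}. ereal (wlat V phi k \<pi> t))"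
  by (simp add: cost_def)

lemma cost_le_iff: "J (ereal T) \<pi> \<le> ereal c \<longleftrightarrow> (\<forall>t\<ge>T. wlat V phi k \<pi> t \<le> c)"
  by (auto simp: cost_finite SUP_le_iff)

lemma cost_infinity: "J \<infinity> \<pi> = (INF r\<in>{0..}. J (ereal r) \<pi>)"
  by (simp add: cost_def Limsup_at_top_real)

lemma cost_antimono:
  assumes "0 \<le> T" "T \<le> T'"
  shows "J T' \<pi> \<le> J T \<pi>"
proof (cases T')
  case (real r')
  then obtain r where "T = ereal r" "r \<le> r'" using assms by (cases T) auto
  then show ?thesis using real by (simp add: cost_finite SUP_subset_mono)
next
  case PInf
  show ?thesis
  proof (cases T)
    case (real r)
    then have "r \<in> {0..}" using assms(1) by simp
    then show ?thesis unfolding PInf \<open>T = ereal r\<close> cost_infinity by (rule INF_lower)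
  qed (use PInf assms in auto)
qed (use assms in auto)

lemma shifted_strategy:
  assumes "\<pi> \<in> Strat" "0 \<le> r"
  shows "(\<lambda>s. \<pi> (r + s)) \<in> Strat"
proof -
  have "lipschitz1_on ((+) r ` {0..}) (\<lambda>t. \<pi> t i)" if "i < k" for i
    using assms that lipschitz1_on_subset[of "{0..}"] unfolding strategies_iff by auto
  then show ?thesis unfolding strategies_iff lipschitz1_on_translate by simp
qed

text \<open>The strategy \<open>\<pi>\<close> delayed by \<open>r\<close> costs from time \<open>0\<close> at most what \<open>\<pi>\<close> costs from time \<open>r\<close>.\<close>

lemma opt_cost_le_cost_from:
  assumes "\<pi> \<in> Strat" "0 \<le> r"
  shows "Jopt 0 \<le> J (ereal r) \<pi>"
proof -
  let ?\<sigma> = "\<lambda>s. \<pi> (r + s)"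
  have "Jopt 0 \<le> J 0 ?\<sigma>"
    unfolding opt_cost_def by (rule INF_lower[OF shifted_strategy[OF assms]])
  also have "\<dots> \<le> J (ereal r) \<pi>"
    unfolding zero_ereal_def cost_finite
  proof (rule SUP_least)
    fix t :: real assume "t \<in> {0..}"
    have "wlat V phi k ?\<sigma> t \<le> wlat V phi k \<pi> (r + t)" by (rule wlat_shift_le[OF assms(2)])
    also have "ereal (wlat V phi k \<pi> (r + t)) \<le> (SUP t\<in>{r..}. ereal (wlat V phi k \<pi> t))"
      using \<open>t \<in> {0..}\<close> by (intro SUP_upper) auto
    finally show "ereal (wlat V phi k ?\<sigma> t) \<le> (SUP t\<in>{r..}. ereal (wlat V phi k \<pi> t))" by simp
  qed
  finally show ?thesis .
qed

theorem opt_cost_eq: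
  assumes "0 \<le> T"
  shows "Jopt T = Jopt 0"
proof (rule antisym)
  show "Jopt T \<le> Jopt 0"
    unfolding opt_cost_def using assms by (intro INF_mono) (auto intro: cost_antimono)
  have "Jopt 0 \<le> J T \<pi>" if "\<pi> \<in> Strat" for \<pi>
  proof (cases T)
    case (real r)
    then show ?thesis using opt_cost_le_cost_from[OF that] assms by simp
  next
    case PInf
    then show ?thesis using opt_cost_le_cost_from[OF that] by (simp add: cost_infinity le_INF_iff)
  qed (use assms in simp)
  then show "Jopt 0 \<le> Jopt T" unfolding opt_cost_def[of _ _ _ _ _ _ T] by (rule INF_greatest)
qed

theorem opt_strategies_mono:
  assumes "0 \<le> T1" "T1 \<le> T2"
  shows "opt_strategies V E ends A phi k T1 \<subseteq> opt_strategies V E ends A phi k T2"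
proof
  fix \<pi> assume "\<pi> \<in> opt_strategies V E ends A phi k T1"
  then have \<pi>: "\<pi> \<in> Strat" "J T1 \<pi> = Jopt T1" by (auto simp: opt_strategies_def)
  have "J T2 \<pi> \<le> J T1 \<pi>" by (rule cost_antimono[OF assms])
  also have "\<dots> = Jopt T2" using \<pi>(2) opt_cost_eq[of T1] opt_cost_eq[of T2] assms by simp
  finally have "J T2 \<pi> \<le> Jopt T2" .
  moreover have "Jopt T2 \<le> J T2 \<pi>" unfolding opt_cost_def by (rule INF_lower[OF \<pi>(1)])
  ultimately show "\<pi> \<in> opt_strategies V E ends A phi k T2"
    using \<pi>(1) by (simp add: opt_strategies_def)
qed

section \<open>Existence of optimal strategies\<close>

definition converges_pointwise :: "(nat \<Rightarrow> real \<Rightarrow> nat \<Rightarrow> ('v, 'e) gpt) \<Rightarrow> (real \<Rightarrow> nat \<Rightarrow> ('v, 'e) gpt) \<Rightarrow> bool" where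
  "converges_pointwise \<pi> \<pi>' \<longleftrightarrow> (\<forall>t\<ge>0. \<forall>i<k. converges_to (\<lambda>m. \<pi> m t i) (\<pi>' t i))"

text \<open>Arzela-Ascoli: a diagonal subsequence converges at all rational times, hence, the strategies
  being equi-Lipschitz, at all times.\<close>

theorem strategies_seq_compact:
  fixes \<pi> :: "nat \<Rightarrow> real \<Rightarrow> nat \<Rightarrow> ('v, 'e) gpt"
  assumes "\<And>n. \<pi> n \<in> Strat"
  shows "\<exists>r \<pi>'. strict_mono r \<and> \<pi>' \<in> Strat \<and> converges_pointwise (\<pi> \<circ> r) \<pi>'"
proof -
  have lip: "lipschitz1_on {0..} (\<lambda>t. \<pi> n t i)" if "i < k" for n i
    using assms that unfolding strategies_iff by blast
  have "range (\<lambda>n. \<pi> n (of_rat q) i) \<subseteq> GP" if "(q, i) \<in> {(q, i). 0 \<le> q \<and> i < k}" for q i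
    using lipschitz1_onD(1)[OF lip] that by auto
  then obtain r where r: "strict_mono r" and rat: "\<forall>(q, i)\<in>{(q, i). 0 \<le> q \<and> i < k}.
      \<exists>l. converges_to ((\<lambda>n. \<pi> n (of_rat q) i) \<circ> r) l"
    using diagonal_convergent_subseq[of "{(q, i). 0 \<le> q \<and> i < k}" "\<lambda>(q :: rat, i) n. \<pi> n (of_rat q) i"]
    by (auto simp: case_prod_beta)
  have "\<exists>l. converges_to (\<lambda>m. \<pi> (r m) t i) l" if "0 \<le> t" "i < k" for t i
    using lipschitz1_converges_everywhere[of "\<lambda>m t. \<pi> (r m) t i"] lip rat that by (auto simp: o_def)
  then obtain \<pi>' where \<pi>': "\<And>t i. 0 \<le> t \<Longrightarrow> i < k \<Longrightarrow> converges_to (\<lambda>m. \<pi> (r m) t i) (\<pi>' t i)"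
    by metis
  have "lipschitz1_on {0..} (\<lambda>t. \<pi>' t i)" if "i < k" for i
    unfolding lipschitz1_on_def
  proof (intro conjI ballI)
    fix a b :: real assume "a \<in> {0..}" "b \<in> {0..}"
    then show "\<pi>' a i \<in> GP" using \<pi>' that unfolding converges_to_def by simp
    show "d (\<pi>' a i) (\<pi>' b i) \<le> \<bar>a - b\<bar>"
      using gdist_limit_le[OF \<pi>' \<pi>' lipschitz1_onD(2)[OF lip] tendsto_const] that
        \<open>a \<in> {0..}\<close> \<open>b \<in> {0..}\<close> by simp
  qed
  then have "\<pi>' \<in> Strat" unfolding strategies_iff by blast
  then show ?thesis using r \<pi>' unfolding converges_pointwise_def by (auto simp: o_def)
qed

lemma converges_pointwise_subseq:
  "converges_pointwise \<pi> \<pi>' \<Longrightarrow> strict_mono r \<Longrightarrow> converges_pointwise (\<pi> \<circ> r) \<pi>'"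
  unfolding converges_pointwise_def using converges_to_subseq by (fastforce simp: o_def)

lemma visit_limit:
  fixes \<pi> :: "nat \<Rightarrow> real \<Rightarrow> nat \<Rightarrow> ('v, 'e) gpt"
  assumes "\<And>m. \<pi> m \<in> Strat" "converges_pointwise \<pi> \<pi>'" "v \<in> V" "i < k"
    and "\<And>m. 0 \<le> b m" "b \<longlonglongrightarrow> b0" "\<And>m. \<pi> m (b m) i = Vtx v"
  shows "\<pi>' b0 i = Vtx v"
proof -
  have "0 \<le> b0" using LIMSEQ_le_const[OF assms(6)] assms(5) by blast
  have lip: "lipschitz1_on {0..} (\<lambda>s. \<pi> m s i)" for m
    using assms(1,4) unfolding strategies_iff by blast
  have lim: "converges_to (\<lambda>m. \<pi> m b0 i) (\<pi>' b0 i)"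
    using assms(2,4) \<open>0 \<le> b0\<close> unfolding converges_pointwise_def by blast
  have "d (\<pi>' b0 i) (Vtx v) \<le> 0"
  proof (rule gdist_limit_le[OF lim])
    show "converges_to (\<lambda>_. Vtx v) (Vtx v)" using assms(3) by (simp add: converges_to_const)
    show "(\<lambda>m. \<bar>b0 - b m\<bar>) \<longlonglongrightarrow> 0"
      using tendsto_rabs_zero[OF LIM_zero[OF assms(6)]] by (simp add: abs_minus_commute)
    show "d (\<pi> m b0 i) (Vtx v) \<le> \<bar>b0 - b m\<bar>" for m
      using lipschitz1_onD(2)[OF lip, of b0 "b m" m] assms(5,7) \<open>0 \<le> b0\<close> by simp
  qed
  moreover have "\<pi>' b0 i \<in> GP" using lim unfolding converges_to_def by blast
  ultimately show ?thesis using gdist_node_le_0_imp_eq assms(3) by blast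
qed

lemma visits_persist_in_limit:
  fixes \<pi> :: "nat \<Rightarrow> real \<Rightarrow> nat \<Rightarrow> ('v, 'e) gpt"
  assumes "\<And>m. \<pi> m \<in> Strat" "converges_pointwise \<pi> \<pi>'" "v \<in> V" "0 \<le> a"
    and visits: "eventually (\<lambda>m. \<exists>b\<in>{a..t}. \<exists>i<k. \<pi> m b i = Vtx v) sequentially"
  shows "\<exists>b\<in>{a..t}. \<exists>i<k. \<pi>' b i = Vtx v"
proof -
  obtain N where "\<And>m. \<exists>b\<in>{a..t}. \<exists>i<k. \<pi> (m + N) b i = Vtx v"
    using visits unfolding eventually_sequentially by (meson le_add2)
  then obtain b i where bi: "\<And>m. b m \<in> {a..t}" "\<And>m. i m < k" "\<And>m. \<pi> (m + N) (b m) (i m) = Vtx v"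
    by metis
  have "\<exists>i0 r1. strict_mono (r1 :: nat \<Rightarrow> nat) \<and> (\<forall>n. i (r1 n) = i0)"
    by (rule finite_range_imp_constant_subseq[of "{..<k}"]) (use bi(2) in auto)
  then obtain i0 and r1 :: "nat \<Rightarrow> nat" where r1: "strict_mono r1" "\<And>n. i (r1 n) = i0" by blast
  have "seq_compact {a..t}" by (simp add: compact_imp_seq_compact)
  moreover have "\<forall>n. (b \<circ> r1) n \<in> {a..t}" using bi(1) by simp
  ultimately obtain b0 and r2 :: "nat \<Rightarrow> nat"
    where b0: "b0 \<in> {a..t}" "strict_mono r2" "(b \<circ> r1 \<circ> r2) \<longlonglongrightarrow> b0"
    by (rule seq_compactE)
  define \<rho> where "\<rho> m = r1 (r2 m) + N" for m
  have "strict_mono \<rho>"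
    using strict_mono_o[OF r1(1) b0(2)] unfolding \<rho>_def strict_mono_def by simp
  have "i0 < k" using bi(2) r1(2) by metis
  have "\<pi>' b0 i0 = Vtx v"
  proof (rule visit_limit[OF _ converges_pointwise_subseq[OF assms(2) \<open>strict_mono \<rho>\<close>] assms(3) \<open>i0 < k\<close>])
    show "0 \<le> (b \<circ> r1 \<circ> r2) m" for m using bi(1) assms(4) by (auto intro: order_trans)
    show "(\<pi> \<circ> \<rho>) m ((b \<circ> r1 \<circ> r2) m) i0 = Vtx v" for m
      using bi(3)[of "r1 (r2 m)"] r1(2) by (simp add: \<rho>_def)
  qed (use assms(1) b0(3) in \<open>auto simp: o_def\<close>)
  then show ?thesis using b0(1) \<open>i0 < k\<close> by blast
qed

lemma idle_limit_le:
  fixes \<pi> :: "nat \<Rightarrow> real \<Rightarrow> nat \<Rightarrow> ('v, 'e) gpt"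
  assumes "\<And>m. \<pi> m \<in> Strat" "converges_pointwise \<pi> \<pi>'" "v \<in> V" "0 \<le> t"
    and "\<And>m. idle k (\<pi> m) v t \<le> c m" "c \<longlonglongrightarrow> c0"
  shows "idle k \<pi>' v t \<le> c0"
proof (rule ccontr)
  assume "\<not> idle k \<pi>' v t \<le> c0"
  define L where "L = last_visit k \<pi>' v t"
  have "L < t - c0" using \<open>\<not> idle k \<pi>' v t \<le> c0\<close> by (simp add: idle_def L_def)
  define a where "a = (L + (t - c0)) / 2"
  have a: "L < a" "a < t - c0" "0 \<le> a"
    using \<open>L < t - c0\<close> last_visit_nonneg[of \<pi>' v t] by (auto simp: a_def L_def)
  have "eventually (\<lambda>m. c m < t - a) sequentially"
    using order_tendstoD(2)[OF assms(6)] a(2) by simp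
  then have "eventually (\<lambda>m. \<exists>b\<in>{a..t}. \<exists>i<k. \<pi> m b i = Vtx v) sequentially"
  proof (rule eventually_mono)
    fix m assume "c m < t - a"
    then have "a < last_visit k (\<pi> m) v t" using assms(5)[of m] by (simp add: idle_def)
    then show "\<exists>b\<in>{a..t}. \<exists>i<k. \<pi> m b i = Vtx v"
      unfolding less_last_visit_iff[OF a(3)] by auto
  qed
  then obtain b i where "b \<in> {a..t}" "i < k" "\<pi>' b i = Vtx v"
    using visits_persist_in_limit[OF assms(1-3) a(3)] by blast
  then have "b \<le> L" unfolding L_def using a(3) by (intro visit_le_last_visit) auto
  then show False using \<open>b \<in> {a..t}\<close> a(1) by simp
qed

lemma wlat_limit_le:
  fixes \<pi> :: "nat \<Rightarrow> real \<Rightarrow> nat \<Rightarrow> ('v, 'e) gpt"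
  assumes "\<And>m. \<pi> m \<in> Strat" "converges_pointwise \<pi> \<pi>'" "0 \<le> t"
    and "\<And>m. wlat V phi k (\<pi> m) t \<le> c m" "c \<longlonglongrightarrow> c0"
  shows "wlat V phi k \<pi>' t \<le> c0"
  unfolding wlat_le_iff
proof
  fix v assume v: "v \<in> V"
  have "idle k (\<pi> m) v t \<le> c m / phi v" for m
    using order.trans[OF idle_le_wlat[OF v] assms(4)] weight_pos[OF v]
    by (simp add: pos_le_divide_eq mult.commute)
  moreover have "(\<lambda>m. c m / phi v) \<longlonglongrightarrow> c0 / phi v"
    using assms(5) weight_pos[OF v] by (intro tendsto_divide tendsto_const) auto
  ultimately have "idle k \<pi>' v t \<le> c0 / phi v"
    by (rule idle_limit_le[OF assms(1,2) v assms(3)])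
  then show "phi v * idle k \<pi>' v t \<le> c0"
    using weight_pos[OF v] by (simp add: pos_le_divide_eq mult.commute)
qed

theorem optimal_strategy_exists:
  assumes "Jopt 0 = ereal j"
  shows "\<exists>\<pi>\<in>Strat. J 0 \<pi> = ereal j"
proof -
  have "\<exists>\<pi>\<in>Strat. J 0 \<pi> < ereal (j + inverse (Suc n))" for n
  proof -
    have "Jopt 0 < ereal (j + inverse (Suc n))" using assms by simp
    then show ?thesis unfolding opt_cost_def INF_less_iff .
  qed
  then obtain \<pi> where \<pi>: "\<And>n. \<pi> n \<in> Strat" "\<And>n. J 0 (\<pi> n) < ereal (j + inverse (Suc n))"
    by metis
  obtain r :: "nat \<Rightarrow> nat" and \<pi>'
    where r: "strict_mono r" and \<pi>': "\<pi>' \<in> Strat" "converges_pointwise (\<pi> \<circ> r) \<pi>'"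
    using strategies_seq_compact[of \<pi>] \<pi>(1) by blast
  have "wlat V phi k \<pi>' t \<le> j + 0" if "0 \<le> t" for t
  proof (rule wlat_limit_le[OF _ \<pi>'(2) that])
    show "wlat V phi k ((\<pi> \<circ> r) m) t \<le> j + inverse (Suc (r m))" for m
      using less_imp_le[OF \<pi>(2)[of "r m"]] that unfolding zero_ereal_def cost_le_iff by simp
    show "(\<lambda>m. j + inverse (Suc (r m))) \<longlonglongrightarrow> j + 0"
      using LIMSEQ_subseq_LIMSEQ[OF LIMSEQ_inverse_real_of_nat r] by (intro tendsto_intros) (simp add: o_def)
  qed (use \<pi>(1) in simp)
  then have "J 0 \<pi>' \<le> ereal j" unfolding zero_ereal_def cost_le_iff by simp
  moreover have "ereal j \<le> J 0 \<pi>'"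
    using assms unfolding opt_cost_def by (metis INF_lower[OF \<pi>'(1)])
  ultimately show ?thesis using \<pi>'(1) by auto
qed

section \<open>Optimal strategies from any start\<close>

lemma min_weight_pos: "0 < Min (phi ` V)"
  using finite_V V_nonempty weight_pos by (simp add: Min_gr_iff)

lemma min_weight_le: "v \<in> V \<Longrightarrow> Min (phi ` V) \<le> phi v"
  using finite_V by simp

lemma opt_cost_nonneg: "0 \<le> Jopt 0"
  unfolding opt_cost_def
proof (rule INF_greatest)
  fix \<pi> assume "\<pi> \<in> Strat"
  have "ereal 0 \<le> ereal (wlat V phi k \<pi> 0)" using wlat_nonneg[of 0 \<pi>] by simp
  also have "\<dots> \<le> J (ereal 0) \<pi>" unfolding cost_finite by (rule SUP_upper) simp
  finally show "0 \<le> J 0 \<pi>" by (simp add: zero_ereal_def)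
qed

lemma strategy_from_start:
  assumes "\<pi> \<in> Strat" "\<forall>i<k. p0 i \<in> GP" "gdiam V E ends A < D"
  shows "\<exists>\<sigma>\<in>Strat. (\<forall>i<k. \<sigma> 0 i = p0 i) \<and> (\<forall>t>D. \<forall>i<k. \<sigma> t i = \<pi> t i)"
proof -
  have "0 \<le> D" using diam_nonneg assms(3) by linarith
  have lip: "lipschitz1_on {0..} (\<lambda>t. \<pi> t i)" if "i < k" for i
    using assms(1) that unfolding strategies_iff by blast
  have "\<exists>p. p 0 = p0 i \<and> (\<forall>a\<ge>D. p a = \<pi> D i) \<and> lipschitz1_on {0..} p" if "i < k" for i
  proof -
    have pts: "p0 i \<in> GP" "\<pi> D i \<in> GP"
      using assms(2) that lipschitz1_onD(1)[OF lip] \<open>0 \<le> D\<close> by auto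
    then have "d (p0 i) (\<pi> D i) < D" using gdist_le_diam[OF pts] assms(3) by linarith
    then obtain c where "c < D" "walk (p0 i) (\<pi> D i) c" using gdist_less_walk pts by blast
    moreover obtain p where "p 0 = p0 i" "\<forall>a\<ge>c. p a = \<pi> D i" "lipschitz1_on {0..} p"
      using walk_imp_path[OF calculation(2)] by blast
    ultimately show ?thesis by (intro exI[of _ p]) auto
  qed
  then obtain p where p: "\<And>i. i < k \<Longrightarrow> p i 0 = p0 i \<and> (\<forall>a\<ge>D. p i a = \<pi> D i) \<and> lipschitz1_on {0..} (p i)"
    by metis
  define \<sigma> where "\<sigma> t i = (if t \<le> D then p i t else \<pi> t i)" for t i
  have "lipschitz1_on {0..} (\<lambda>t. \<sigma> t i)" if "i < k" for i
    unfolding \<sigma>_def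
  proof (rule lipschitz1_on_glue)
    show "lipschitz1_on {0..D} (p i)" using lipschitz1_on_subset p[OF that] by fastforce
    show "lipschitz1_on {D..} (\<lambda>t. \<pi> t i)" using lipschitz1_on_subset[OF lip[OF that]] \<open>0 \<le> D\<close> by auto
  qed (use p[OF that] \<open>0 \<le> D\<close> in auto)
  then have "\<sigma> \<in> Strat" unfolding strategies_iff by blast
  then show ?thesis using p \<open>0 \<le> D\<close> by (intro bexI[of _ \<sigma>]) (auto simp: \<sigma>_def)
qed

text \<open>A strategy of cost at most \<open>j\<close> visits every node \<open>v\<close> at least every \<open>j / \<phi> v\<close> time units,
  so after time \<open>D + j / \<phi>\<^sub>m\<^sub>i\<^sub>n\<close> all its last visits happened after \<open>D\<close>.\<close>

lemma cost_le_if_agree_after: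
  assumes "J 0 \<pi> \<le> ereal j" "0 \<le> D" "D + j / Min (phi ` V) < T"
    and agree: "\<And>t i. D < t \<Longrightarrow> i < k \<Longrightarrow> \<sigma> t i = \<pi> t i"
  shows "J (ereal T) \<sigma> \<le> ereal j"
proof -
  have wl: "wlat V phi k \<pi> t \<le> j" if "0 \<le> t" for t
    using assms(1) that unfolding zero_ereal_def cost_le_iff by blast
  have "0 \<le> j" using wl[of 0] wlat_nonneg[of 0 \<pi>] by simp
  have "phi v * idle k \<sigma> v t \<le> j" if "T \<le> t" "v \<in> V" for t v
  proof -
    have "0 \<le> j / Min (phi ` V)" using \<open>0 \<le> j\<close> min_weight_pos by simp
    then have "0 \<le> t" "D + j / Min (phi ` V) < t" using assms(2,3) that(1) by linarith+
    have "phi v * idle k \<pi> v t \<le> j"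
      using wl[OF \<open>0 \<le> t\<close>] idle_le_wlat[OF that(2)] by (rule order.trans[rotated])
    then have "idle k \<pi> v t \<le> j / phi v"
      using weight_pos[OF that(2)] by (simp add: pos_le_divide_eq mult.commute)
    also have "\<dots> \<le> j / Min (phi ` V)"
      using \<open>0 \<le> j\<close> min_weight_pos min_weight_le[OF that(2)] by (intro divide_left_mono) auto
    finally have "D < last_visit k \<pi> v t"
      using \<open>D + j / Min (phi ` V) < t\<close> by (simp add: idle_def)
    then have "idle k \<sigma> v t \<le> idle k \<pi> v t"
      using last_visit_le_if_agree[OF assms(2) _ agree] by (simp add: idle_def)
    then have "phi v * idle k \<sigma> v t \<le> phi v * idle k \<pi> v t"
      using weight_pos[OF that(2)] by (simp add: mult_left_mono)
    then show ?thesis using \<open>phi v * idle k \<pi> v t \<le> j\<close> by linarith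
  qed
  then show ?thesis unfolding cost_le_iff wlat_le_iff by blast
qed

theorem optimal_strategy_from_start:
  assumes "\<forall>i<k. p0 i \<in> GP"
    and T: "ereal T > ereal (gdiam V E ends A) + Jopt 0 / ereal (Min (phi ` V))"
  shows "\<exists>\<sigma>\<in>opt_strategies V E ends A phi k (ereal T). \<forall>i<k. \<sigma> 0 i = p0 i"
proof -
  let ?D\<^sub>G = "gdiam V E ends A" and ?\<phi>\<^sub>m\<^sub>i\<^sub>n = "Min (phi ` V)"
  obtain j where j: "Jopt 0 = ereal j"
    using T opt_cost_nonneg min_weight_pos by (cases "Jopt 0") auto
  then have "?D\<^sub>G + j / ?\<phi>\<^sub>m\<^sub>i\<^sub>n < T" using T min_weight_pos by simp
  define D where "D = (?D\<^sub>G + (T - j / ?\<phi>\<^sub>m\<^sub>i\<^sub>n)) / 2"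
  have D: "?D\<^sub>G < D" "D + j / ?\<phi>\<^sub>m\<^sub>i\<^sub>n < T"
    using \<open>?D\<^sub>G + j / ?\<phi>\<^sub>m\<^sub>i\<^sub>n < T\<close> by (simp_all add: D_def field_simps)
  obtain \<pi> where \<pi>: "\<pi> \<in> Strat" "J 0 \<pi> = ereal j"
    using optimal_strategy_exists[OF j] by blast
  obtain \<sigma> where \<sigma>: "\<sigma> \<in> Strat" "\<forall>i<k. \<sigma> 0 i = p0 i" "\<forall>t>D. \<forall>i<k. \<sigma> t i = \<pi> t i"
    using strategy_from_start[OF \<pi>(1) assms(1) D(1)] by blast
  have "0 \<le> D" using diam_nonneg D(1) by linarith
  then have "J (ereal T) \<sigma> \<le> ereal j"
    using D(2) \<pi>(2) \<sigma>(3) by (intro cost_le_if_agree_after[where \<pi> = \<pi> and D = D]) auto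
  moreover have "0 \<le> j / ?\<phi>\<^sub>m\<^sub>i\<^sub>n" using opt_cost_nonneg j min_weight_pos by simp
  then have "Jopt (ereal T) = ereal j" using opt_cost_eq[of "ereal T"] j \<open>0 \<le> D\<close> D(2) by simp
  moreover have "Jopt (ereal T) \<le> J (ereal T) \<sigma>" unfolding opt_cost_def by (rule INF_lower[OF \<sigma>(1)])
  ultimately show ?thesis using \<sigma>(1,2) by (intro bexI[of _ \<sigma>]) (auto simp: opt_strategies_def)
qed

end

theorem mainTheorem2:
  fixes V :: "'v set" and E :: "'e set" and ends :: "'e \<Rightarrow> 'v \<times> 'v"
    and A :: "'e \<Rightarrow> real" and phi :: "'v \<Rightarrow> real" and k :: nat
  assumes "wf_graph V E ends A phi" and "k \<ge> 1"
  shows "(\<forall>T::ereal. 0 \<le> T \<longrightarrow> opt_cost V E ends A phi k T = opt_cost V E ends A phi k 0)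
    \<and> (\<forall>T1 T2::ereal. 0 \<le> T1 \<longrightarrow> T1 < T2 \<longrightarrow>
         opt_strategies V E ends A phi k T1 \<subseteq> opt_strategies V E ends A phi k T2)
    \<and> (\<forall>p0 :: nat \<Rightarrow> ('v, 'e) gpt. (\<forall>i<k. p0 i \<in> gpoints V E A) \<longrightarrow>
         (\<forall>T::real. ereal T > ereal (gdiam V E ends A) + opt_cost V E ends A phi k 0 / ereal (Min (phi ` V)) \<longrightarrow>
            (\<exists>str\<in>opt_strategies V E ends A phi k (ereal T). \<forall>i<k. str 0 i = p0 i)))"
proof -
  interpret patrol V E ends A phi k
    using assms(1) by unfold_locales
  show ?thesis
  proof (intro conjI allI impI)
    show "Jopt T = Jopt 0" if "0 \<le> T" for T using that by (rule opt_cost_eq)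
    show "opt_strategies V E ends A phi k T1 \<subseteq> opt_strategies V E ends A phi k T2"
      if "0 \<le> T1" "T1 < T2" for T1 T2 using that by (intro opt_strategies_mono) auto
  qed (rule optimal_strategy_from_start)
qed

end
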